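(* Let $(\Omega,+)$ be a group and $a,b$ subgroups with $a\top b$. Identify $\Omega$ with $a\times b$ via the bijection $(\alpha,\beta)\mapsto\alpha+\beta$, so that every subset of $\Omega$ is a relation between $a$ and $b$. For $x,y,z\subseteq\Omega$ define the ternary composition of relations $z\circ y^{-1}\circ x:=\{\alpha'+\beta' : \alpha'\in a,\beta'\in b,\ \exists \alpha''\in a,\beta''\in b \text{ with } \alpha''+\beta''\in y,\ \alpha'+\beta''\in x,\ \alpha''+\beta'\in z\}$. Then $z\circ y^{-1}\circ x=\Gamma(x,a,y,b,z)$ for all $x,y,z\subseteq\Omega$. If moreover $a$ and $b$ commute (every element of $a$ commutes with every element of $b$), then the set of subgroups of $\Omega$ is stable under this ternary law.
   Context: $(\Omega,+)$ is a group written additively but not necessarily abelian. For subsets $x,y\subseteq\Omega$, $x\top y$ means every $\omega\in\Omega$ has a unique decomposition $\omega=\xi+\eta$ with $\xi\in x$, $\eta\in y$. For subsets $x,a,y,b,z$: $\Gamma(x,a,y,b,z)=\{\omega\in\Omega:\exists\alpha\in a,\beta\in b:\ \alpha+\omega+\beta\in y,\ \alpha+\omega\in z,\ \omega+\beta\in x\}$. *)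

theory Defs
  imports Main
begin

definition is_subgroup :: "'a::group_add set \<Rightarrow> bool" where
  "is_subgroup H \<longleftrightarrow> 0 \<in> H \<and> (\<forall>x\<in>H. \<forall>y\<in>H. x + y \<in> H) \<and> (\<forall>x\<in>H. - x \<in> H)"

definition top_rel :: "'a::group_add set \<Rightarrow> 'a set \<Rightarrow> bool" where
  "top_rel x y \<longleftrightarrow> (\<forall>\<omega>. \<exists>!p. p \<in> x \<times> y \<and> \<omega> = fst p + snd p)"

definition Gamma :: "'a::group_add set \<Rightarrow> 'a set \<Rightarrow> 'a set \<Rightarrow> 'a set \<Rightarrow> 'a set \<Rightarrow> 'a set" where
  "Gamma x a y b z = {\<omega>. \<exists>\<alpha>\<in>a. \<exists>\<beta>\<in>b. \<alpha> + \<omega> + \<beta> \<in> y \<and> \<alpha> + \<omega> \<in> z \<and> \<omega> + \<beta> \<in> x}"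

definition tern :: "'a::group_add set \<Rightarrow> 'a set \<Rightarrow> 'a set \<Rightarrow> 'a set \<Rightarrow> 'a set \<Rightarrow> 'a set" where
  "tern a b x y z = {\<alpha>' + \<beta>' | \<alpha>' \<beta>'. \<alpha>' \<in> a \<and> \<beta>' \<in> b \<and>
     (\<exists>\<alpha>''\<in>a. \<exists>\<beta>''\<in>b. \<alpha>'' + \<beta>'' \<in> y \<and> \<alpha>' + \<beta>'' \<in> x \<and> \<alpha>'' + \<beta>' \<in> z)}"

end

theory Submission
  imports Defs
begin

text \<open>Translating a point \<open>\<alpha>' + \<beta>'\<close> of the composite by \<open>\<alpha>'' - \<alpha>'\<close> on the left and by
  \<open>-\<beta>' + \<beta>''\<close> on the right yields the three witnesses required by \<open>\<Gamma>\<close>; conversely the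
  translations witnessing membership in \<open>\<Gamma>\<close>, applied to a decomposition \<open>\<omega> = \<alpha>' + \<beta>'\<close>,
  yield the witnesses \<open>\<alpha>'', \<beta>''\<close> of the composite. When \<open>a\<close> and \<open>b\<close> commute,
  \<open>(\<alpha>, \<beta>) \<mapsto> \<alpha> + \<beta>\<close> is a homomorphism \<open>a \<times> b \<rightarrow> \<Omega>\<close>, so sums and negatives of
  witnesses are again witnesses.\<close>

lemma is_subgroup_zero: "is_subgroup H \<Longrightarrow> 0 \<in> H"
  unfolding is_subgroup_def by blast

lemma is_subgroup_add: "is_subgroup H \<Longrightarrow> u \<in> H \<Longrightarrow> v \<in> H \<Longrightarrow> u + v \<in> H"
  unfolding is_subgroup_def by blast

lemma is_subgroup_minus: "is_subgroup H \<Longrightarrow> u \<in> H \<Longrightarrow> - u \<in> H"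
  unfolding is_subgroup_def by blast

lemma is_subgroup_diff: "is_subgroup H \<Longrightarrow> u \<in> H \<Longrightarrow> v \<in> H \<Longrightarrow> u - v \<in> H"
  by (metis diff_conv_add_uminus is_subgroup_add is_subgroup_minus)

lemma top_rel_decompose:
  assumes "top_rel a b"
  obtains \<alpha> \<beta> where "\<alpha> \<in> a" "\<beta> \<in> b" "\<omega> = \<alpha> + \<beta>"
proof -
  obtain p where "p \<in> a \<times> b" "\<omega> = fst p + snd p"
    using assms unfolding top_rel_def by blast
  then show thesis
    using that by (cases p) auto
qed

lemma ternI:
  assumes "w = \<alpha>' + \<beta>'" "\<alpha>' \<in> a" "\<beta>' \<in> b" "\<alpha>'' \<in> a" "\<beta>'' \<in> b"
    "\<alpha>'' + \<beta>'' \<in> y" "\<alpha>' + \<beta>'' \<in> x" "\<alpha>'' + \<beta>' \<in> z"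
  shows "w \<in> tern a b x y z"
  unfolding tern_def using assms by blast

lemma ternE:
  assumes "w \<in> tern a b x y z"
  obtains \<alpha>' \<beta>' \<alpha>'' \<beta>'' where "w = \<alpha>' + \<beta>'" "\<alpha>' \<in> a" "\<beta>' \<in> b" "\<alpha>'' \<in> a" "\<beta>'' \<in> b"
    "\<alpha>'' + \<beta>'' \<in> y" "\<alpha>' + \<beta>'' \<in> x" "\<alpha>'' + \<beta>' \<in> z"
  using assms unfolding tern_def by blast

lemma tern_subset_Gamma:
  assumes "is_subgroup a" "is_subgroup b"
  shows "tern a b x y z \<subseteq> Gamma x a y b z"
proof
  fix w assume "w \<in> tern a b x y z"
  then obtain \<alpha>' \<beta>' \<alpha>'' \<beta>'' where w: "w = \<alpha>' + \<beta>'"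
    and mem: "\<alpha>' \<in> a" "\<beta>' \<in> b" "\<alpha>'' \<in> a" "\<beta>'' \<in> b"
    and xyz: "\<alpha>'' + \<beta>'' \<in> y" "\<alpha>' + \<beta>'' \<in> x" "\<alpha>'' + \<beta>' \<in> z"
    by (rule ternE)
  have "\<alpha>'' - \<alpha>' \<in> a" "- \<beta>' + \<beta>'' \<in> b"
    using assms mem by (simp_all add: is_subgroup_diff is_subgroup_add is_subgroup_minus)
  moreover have "(\<alpha>'' - \<alpha>') + w + (- \<beta>' + \<beta>'') = \<alpha>'' + \<beta>''"
    and "(\<alpha>'' - \<alpha>') + w = \<alpha>'' + \<beta>'"
    and "w + (- \<beta>' + \<beta>'') = \<alpha>' + \<beta>''"
    unfolding w by (simp_all add: add.assoc[symmetric])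
  ultimately show "w \<in> Gamma x a y b z"
    unfolding Gamma_def using xyz by (intro CollectI bexI) simp_all
qed

lemma Gamma_subset_tern:
  assumes "is_subgroup a" "is_subgroup b"
    and decompose: "\<And>\<omega>. \<exists>\<alpha>\<in>a. \<exists>\<beta>\<in>b. \<omega> = \<alpha> + \<beta>"
  shows "Gamma x a y b z \<subseteq> tern a b x y z"
proof
  fix w assume "w \<in> Gamma x a y b z"
  then obtain p q where pq: "p \<in> a" "q \<in> b" "p + w + q \<in> y" "p + w \<in> z" "w + q \<in> x"
    unfolding Gamma_def by blast
  obtain \<alpha>' \<beta>' where ab: "\<alpha>' \<in> a" "\<beta>' \<in> b" and w: "w = \<alpha>' + \<beta>'"
    using decompose by blast
  show "w \<in> tern a b x y z"
  proof (rule ternI[OF w ab, of "p + \<alpha>'" "\<beta>' + q"])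
    show "p + \<alpha>' \<in> a" "\<beta>' + q \<in> b"
      using assms pq ab by (simp_all add: is_subgroup_add)
    show "p + \<alpha>' + (\<beta>' + q) \<in> y" "\<alpha>' + (\<beta>' + q) \<in> x" "p + \<alpha>' + \<beta>' \<in> z"
      using pq unfolding w by (simp_all add: add.assoc)
  qed
qed

lemma tern_eq_Gamma:
  assumes "is_subgroup a" "is_subgroup b" "top_rel a b"
  shows "tern a b x y z = Gamma x a y b z"
  using tern_subset_Gamma[OF assms(1,2)] Gamma_subset_tern[OF assms(1,2)]
    top_rel_decompose[OF assms(3)] by (metis subset_antisym)

lemma add_pairs_commuting:
  fixes \<alpha>1 \<beta>1 \<alpha>2 \<beta>2 :: "'a::group_add"
  assumes "\<beta>1 + \<alpha>2 = \<alpha>2 + \<beta>1"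
  shows "(\<alpha>1 + \<beta>1) + (\<alpha>2 + \<beta>2) = (\<alpha>1 + \<alpha>2) + (\<beta>1 + \<beta>2)"
proof -
  have "(\<alpha>1 + \<beta>1) + (\<alpha>2 + \<beta>2) = \<alpha>1 + (\<beta>1 + \<alpha>2) + \<beta>2"
    by (simp add: add.assoc)
  also have "\<dots> = (\<alpha>1 + \<alpha>2) + (\<beta>1 + \<beta>2)"
    by (simp add: assms add.assoc)
  finally show ?thesis .
qed

lemma minus_add_commuting:
  fixes \<alpha> \<beta> :: "'a::group_add"
  assumes "- \<beta> + - \<alpha> = - \<alpha> + - \<beta>"
  shows "- (\<alpha> + \<beta>) = - \<alpha> + - \<beta>"
  using assms by (simp add: minus_add)

context
  fixes a b :: "'a::group_add set"
  assumes sub_a: "is_subgroup a" and sub_b: "is_subgroup b"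
    and commute: "\<And>\<alpha> \<beta>. \<alpha> \<in> a \<Longrightarrow> \<beta> \<in> b \<Longrightarrow> \<beta> + \<alpha> = \<alpha> + \<beta>"
begin

lemma add_pairs:
  "\<alpha>2 \<in> a \<Longrightarrow> \<beta>1 \<in> b \<Longrightarrow> (\<alpha>1 + \<beta>1) + (\<alpha>2 + \<beta>2) = (\<alpha>1 + \<alpha>2) + (\<beta>1 + \<beta>2)"
  by (rule add_pairs_commuting) (rule commute)

lemma minus_pair: "\<alpha> \<in> a \<Longrightarrow> \<beta> \<in> b \<Longrightarrow> - (\<alpha> + \<beta>) = - \<alpha> + - \<beta>"
  by (intro minus_add_commuting commute) (simp_all add: sub_a sub_b is_subgroup_minus)

lemma tern_zero:
  "is_subgroup x \<Longrightarrow> is_subgroup y \<Longrightarrow> is_subgroup z \<Longrightarrow> 0 \<in> tern a b x y z"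
  by (rule ternI[of 0 0 0 _ _ 0 0]) (simp_all add: is_subgroup_zero sub_a sub_b)

lemma tern_add:
  assumes "is_subgroup x" "is_subgroup y" "is_subgroup z"
    and "u \<in> tern a b x y z" "v \<in> tern a b x y z"
  shows "u + v \<in> tern a b x y z"
proof -
  obtain \<alpha>1 \<beta>1 \<alpha>2 \<beta>2 where u: "u = \<alpha>1 + \<beta>1"
    and h: "\<alpha>1 \<in> a" "\<beta>1 \<in> b" "\<alpha>2 \<in> a" "\<beta>2 \<in> b" "\<alpha>2 + \<beta>2 \<in> y" "\<alpha>1 + \<beta>2 \<in> x" "\<alpha>2 + \<beta>1 \<in> z"
    using assms(4) by (rule ternE)
  obtain \<gamma>1 \<delta>1 \<gamma>2 \<delta>2 where v: "v = \<gamma>1 + \<delta>1"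
    and k: "\<gamma>1 \<in> a" "\<delta>1 \<in> b" "\<gamma>2 \<in> a" "\<delta>2 \<in> b" "\<gamma>2 + \<delta>2 \<in> y" "\<gamma>1 + \<delta>2 \<in> x" "\<gamma>2 + \<delta>1 \<in> z"
    using assms(5) by (rule ternE)
  have sums: "(\<alpha>2 + \<gamma>2) + (\<beta>2 + \<delta>2) \<in> y" "(\<alpha>1 + \<gamma>1) + (\<beta>2 + \<delta>2) \<in> x"
    "(\<alpha>2 + \<gamma>2) + (\<beta>1 + \<delta>1) \<in> z"
    using assms(1-3) h k by (simp_all flip: add_pairs add: is_subgroup_add)
  have sum: "u + v = (\<alpha>1 + \<gamma>1) + (\<beta>1 + \<delta>1)"
    unfolding u v using k(1) h(2) by (rule add_pairs)
  show ?thesis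
    by (rule ternI[OF sum _ _ _ _ sums]) (use h k sub_a sub_b in \<open>simp_all add: is_subgroup_add\<close>)
qed

lemma tern_minus:
  assumes "is_subgroup x" "is_subgroup y" "is_subgroup z" and "u \<in> tern a b x y z"
  shows "- u \<in> tern a b x y z"
proof -
  obtain \<alpha>' \<beta>' \<alpha>'' \<beta>'' where u: "u = \<alpha>' + \<beta>'"
    and h: "\<alpha>' \<in> a" "\<beta>' \<in> b" "\<alpha>'' \<in> a" "\<beta>'' \<in> b"
      "\<alpha>'' + \<beta>'' \<in> y" "\<alpha>' + \<beta>'' \<in> x" "\<alpha>'' + \<beta>' \<in> z"
    using assms(4) by (rule ternE)
  have negs: "- \<alpha>'' + - \<beta>'' \<in> y" "- \<alpha>' + - \<beta>'' \<in> x" "- \<alpha>'' + - \<beta>' \<in> z"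
    using assms(1-3) h by (metis minus_pair is_subgroup_minus)+
  have neg: "- u = - \<alpha>' + - \<beta>'"
    unfolding u using h(1,2) by (rule minus_pair)
  show ?thesis
    by (rule ternI[OF neg _ _ _ _ negs]) (use h sub_a sub_b in \<open>simp_all add: is_subgroup_minus\<close>)
qed

lemma is_subgroup_tern:
  "is_subgroup x \<Longrightarrow> is_subgroup y \<Longrightarrow> is_subgroup z \<Longrightarrow> is_subgroup (tern a b x y z)"
  unfolding is_subgroup_def[of "tern a b x y z"]
  by (simp add: tern_zero tern_add tern_minus)

end

theorem theorem4p1:
  fixes a b :: "'a::group_add set"
  assumes "is_subgroup a" and "is_subgroup b" and "top_rel a b"
  shows "(\<forall>x y z. tern a b x y z = Gamma x a y b z) \<and>
         ((\<forall>\<alpha>\<in>a. \<forall>\<beta>\<in>b. \<alpha> + \<beta> = \<beta> + \<alpha>) \<longrightarrow>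
           (\<forall>x y z. is_subgroup x \<and> is_subgroup y \<and> is_subgroup z \<longrightarrow> is_subgroup (tern a b x y z)))"
proof (intro conjI allI impI)
  show "tern a b x y z = Gamma x a y b z" for x y z
    using assms by (rule tern_eq_Gamma)
next
  fix x y z :: "'a set"
  assume "\<forall>\<alpha>\<in>a. \<forall>\<beta>\<in>b. \<alpha> + \<beta> = \<beta> + \<alpha>"
    and "is_subgroup x \<and> is_subgroup y \<and> is_subgroup z"
  then show "is_subgroup (tern a b x y z)"
    using is_subgroup_tern[OF assms(1,2)] by metis
qed

end
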